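(* Let $P$ and $W$ be finite point sets in the plane with $|P|>1$, $|W|>1$ and $P\cup W$ in general position. For $p\in P$ let $V(p)$ be the (closed, convex, possibly unbounded polygonal) Voronoi region of $p$ in the Voronoi diagram of $W\cup\{p\}$. Then for distinct $p,q\in P$: (i) the set $\partial V(p)\cap\partial V(q)$ is either empty, or consists of at most two points, or is a single connected subset of a line (a segment or ray); and if $V(p)\cap V(q)\ne\varnothing$ then $\partial V(p)\cap\partial V(q)\neq\varnothing$. (ii) If $W\neq\{p,q\}$, then $p$ and $q$ are adjacent in $\mathrm{DG}^-(P,W)$ if and only if $\partial V(p)\cap\partial V(q)\neq\varnothing$.
   Context: Let $P$ (the vertices) and $W$ (the witnesses) be finite point sets in $\mathbb{R}^2$; $P$ and $W$ may share points. The witness Delaunay graph $\mathrm{DG}^-(P,W)$ is the graph with vertex set $P$ in which distinct $x,y\in P$ are adjacent if and only if there is an open disk containing no point of $W$ whose bounding circle passes through $x$ and $y$. General position of $P\cup W$ means that no three distinct points of $P\cup W$ are collinear and no four distinct points of $P\cup W$ are concyclic. For a finite set $Q$ and $a\in Q$, the Voronoi region of $a$ is $\{x\in\mathbb{R}^2: |x-a|\le |x-b| \text{ for all } b\in Q\}$. *)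

theory Defs
  imports "HOL-Analysis.Analysis"
begin

type_synonym pt = "real^2"

definition concyclic :: "pt set \<Rightarrow> bool" where
  "concyclic S \<longleftrightarrow> (\<exists>c r. r > 0 \<and> S \<subseteq> sphere c r)"

definition general_position :: "pt set \<Rightarrow> bool" where
  "general_position S \<longleftrightarrow>
     (\<forall>a\<in>S. \<forall>b\<in>S. \<forall>c\<in>S. a \<noteq> b \<and> a \<noteq> c \<and> b \<noteq> c \<longrightarrow> \<not> collinear {a, b, c}) \<and>
     (\<forall>a\<in>S. \<forall>b\<in>S. \<forall>c\<in>S. \<forall>d\<in>S.
        distinct [a, b, c, d] \<longrightarrow> \<not> concyclic {a, b, c, d})"

definition voronoi_region :: "pt set \<Rightarrow> pt \<Rightarrow> pt set" where
  "voronoi_region Q a = {x. \<forall>b\<in>Q. dist x a \<le> dist x b}"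

definition witness_adj :: "pt set \<Rightarrow> pt set \<Rightarrow> pt \<Rightarrow> pt \<Rightarrow> bool" where
  "witness_adj P W x y \<longleftrightarrow> x \<in> P \<and> y \<in> P \<and> x \<noteq> y \<and>
     (\<exists>c r. r > 0 \<and> dist c x = r \<and> dist c y = r \<and> ball c r \<inter> W = {})"

end

theory Submission
  imports Defs
begin

text \<open>
  Write \<open>V(p)\<close> for the Voronoi region of \<open>p\<close> with respect to \<open>W \<union> {p}\<close>.
  Its boundary consists of the points of \<open>V(p)\<close> that are equidistant from \<open>p\<close> and some
  witness \<open>w \<noteq> p\<close>.  Hence a common boundary point \<open>x\<close> of \<open>V(p)\<close> and \<open>V(q)\<close> is
  equidistant from \<open>p\<close> and \<open>q\<close> with no witness strictly closer: it is the centre of a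
  witness-free open disk whose circle passes through \<open>p\<close> and \<open>q\<close>.  Conversely such a centre
  lies on both boundaries as soon as \<open>p, q \<in> W\<close>, or some third witness is also on its circle.

  The set \<open>C\<close> of these centres is convex and lies on the bisector of \<open>p\<close> and \<open>q\<close>, a line.
  Parametrising the bisector, every witness \<open>w \<notin> {p, q}\<close> contributes an affine constraint in
  the parameter whose slope is nonzero by general position; \<open>C\<close> is the feasible interval, and
  the centres with a third witness on their circle are the parameters with an active
  constraint.  Those can only be the two endpoints of the interval, and they exist as soon
  as the interval is nonempty.  Part (i) follows; part (ii) is the observation that
  adjacency in the witness Delaunay graph means exactly \<open>C \<noteq> {}\<close>, together with a
  convexity argument showing that \<open>V(p) \<inter> V(q) \<noteq> {}\<close> forces \<open>C \<noteq> {}\<close>.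
\<close>

lemma dist_sq_diff_affine:
  fixes y a b :: "'a::real_inner"
  shows "(dist y a)\<^sup>2 - (dist y b)\<^sup>2 = 2 * (y \<bullet> (b - a)) + (a \<bullet> a - b \<bullet> b)"
  by (simp add: dist_norm power2_norm_eq_inner inner_diff_left inner_diff_right
      inner_commute algebra_simps)

lemma dist_le_iff_affine:
  fixes y a b :: "'a::real_inner"
  shows "dist y a \<le> dist y b \<longleftrightarrow> 2 * (y \<bullet> (b - a)) + (a \<bullet> a - b \<bullet> b) \<le> 0"
proof -
  have "dist y a \<le> dist y b \<longleftrightarrow> (dist y a)\<^sup>2 - (dist y b)\<^sup>2 \<le> 0"
    by (simp add: power_mono_iff)
  then show ?thesis
    by (simp only: dist_sq_diff_affine)
qed

lemma dist_eq_iff_affine: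
  fixes y a b :: "'a::real_inner"
  shows "dist y a = dist y b \<longleftrightarrow> 2 * (y \<bullet> (b - a)) + (a \<bullet> a - b \<bullet> b) = 0"
proof -
  have "dist y a = dist y b \<longleftrightarrow> (dist y a)\<^sup>2 - (dist y b)\<^sup>2 = 0"
    by (simp add: power2_eq_iff_nonneg)
  then show ?thesis
    by (simp only: dist_sq_diff_affine)
qed

lemma dist_along_line:
  fixes m d p w :: "'a::real_inner"
  defines "\<alpha> \<equiv> 2 * (d \<bullet> (w - p))" and "\<beta> \<equiv> 2 * (m \<bullet> (w - p)) + (p \<bullet> p - w \<bullet> w)"
  shows "dist (m + t *\<^sub>R d) p \<le> dist (m + t *\<^sub>R d) w \<longleftrightarrow> \<alpha> * t + \<beta> \<le> 0"
    and "dist (m + t *\<^sub>R d) p = dist (m + t *\<^sub>R d) w \<longleftrightarrow> \<alpha> * t + \<beta> = 0"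
  by (simp_all add: dist_le_iff_affine dist_eq_iff_affine inner_add_left \<alpha>_def \<beta>_def algebra_simps)

text \<open>Moving from a point equidistant from \<open>p\<close> and \<open>w\<close> in direction \<open>w - p\<close> makes \<open>w\<close>
  strictly closer: ties cannot occur in the interior of a dominance region.\<close>

lemma tie_broken_nearby:
  fixes x p w :: "'a::real_inner"
  assumes "w \<noteq> p" "dist x p = dist x w" "e > 0"
  shows "\<exists>y\<in>ball x e. dist y w < dist y p"
proof -
  define c where "c = e / 2 / norm (w - p)"
  have c: "c > 0" "c * norm (w - p) = e / 2"
    using assms by (simp_all add: c_def)
  define y where "y = x + c *\<^sub>R (w - p)"
  have "dist x y = e / 2"
    using c by (simp add: y_def dist_norm)
  then have "y \<in> ball x e"
    using assms(3) by simp
  moreover have "dist y w < dist y p"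
  proof -
    have "y \<bullet> (w - p) = x \<bullet> (w - p) + c * ((w - p) \<bullet> (w - p))"
      by (simp add: y_def inner_add_left)
    moreover have "(w - p) \<bullet> (w - p) > 0"
      using assms(1) by simp
    ultimately have "y \<bullet> (w - p) > x \<bullet> (w - p)"
      using c by simp
    moreover have "2 * (x \<bullet> (w - p)) + (p \<bullet> p - w \<bullet> w) = 0"
      using assms(2) by (simp add: dist_eq_iff_affine)
    ultimately show ?thesis
      using dist_le_iff_affine[of y p w] by linarith
  qed
  ultimately show ?thesis
    by blast
qed

lemma frontier_dominance_region:
  fixes p :: "'a::real_inner"
  assumes "finite U"
  shows "frontier {x. \<forall>w\<in>U. dist x p \<le> dist x w} =
         {x. (\<forall>w\<in>U. dist x p \<le> dist x w) \<and> (\<exists>w\<in>U - {p}. dist x p = dist x w)}"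
    (is "frontier ?V = _")
proof -
  have "closed ?V"
    unfolding Collect_ball_eq
    by (intro closed_INT ballI closed_Collect_le continuous_intros)
  then have frontier_V: "frontier ?V = ?V - interior ?V"
    by (simp add: frontier_def)
  have "x \<in> interior ?V \<longleftrightarrow> \<not> (\<exists>w\<in>U - {p}. dist x p = dist x w)" if "x \<in> ?V" for x
  proof
    assume "x \<in> interior ?V"
    then obtain e where "e > 0" "ball x e \<subseteq> ?V"
      using mem_interior by blast
    then show "\<not> (\<exists>w\<in>U - {p}. dist x p = dist x w)"
      using tie_broken_nearby by (fastforce simp: not_le)
  next
    assume no_tie: "\<not> (\<exists>w\<in>U - {p}. dist x p = dist x w)"
    define G where "G = (\<Inter>w\<in>U - {p}. {x. dist x p < dist x w})"
    have "open G"
      unfolding G_def using assms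
      by (intro open_INT ballI open_Collect_less continuous_intros) auto
    moreover have "x \<in> G"
      using that no_tie by (force simp: G_def)
    moreover have "G \<subseteq> ?V"
    proof
      fix y assume "y \<in> G"
      then have "dist y p \<le> dist y w" if "w \<in> U" for w
        using that by (cases "w = p") (auto simp: G_def less_imp_le)
      then show "y \<in> ?V"
        by blast
    qed
    ultimately show "x \<in> interior ?V"
      by (meson interiorI)
  qed
  then show ?thesis
    unfolding frontier_V by blast
qed

lemma frontier_voronoi_region:
  assumes "finite W"
  shows "frontier (voronoi_region (insert p W) p) =
         {x. (\<forall>w\<in>W. dist x p \<le> dist x w) \<and> (\<exists>w\<in>W - {p}. dist x p = dist x w)}"
  using frontier_dominance_region[of "insert p W" p] assms
  by (simp add: voronoi_region_def)

text \<open>Centres of open disks free of points of \<open>W\<close> whose bounding circle passes through \<open>p\<close>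
  and \<open>q\<close> (the radius being the common distance to \<open>p\<close> and \<open>q\<close>).\<close>

definition empty_disk_centres :: "'a::metric_space set \<Rightarrow> 'a \<Rightarrow> 'a \<Rightarrow> 'a set" where
  "empty_disk_centres W p q = {x. dist x p = dist x q \<and> (\<forall>w\<in>W. dist x p \<le> dist x w)}"

lemma empty_disk_centres_commute: "empty_disk_centres W p q = empty_disk_centres W q p"
  by (auto simp: empty_disk_centres_def)

text \<open>The centres form the intersection of a hyperplane (the bisector) with half-spaces.\<close>

lemma convex_empty_disk_centres:
  fixes p q :: "'a::real_inner"
  shows "convex (empty_disk_centres W p q)"
proof -
  have "convex ({x. (2 *\<^sub>R (q - p)) \<bullet> x = q \<bullet> q - p \<bullet> p} \<inter>
                (\<Inter>w\<in>W. {x. (2 *\<^sub>R (w - p)) \<bullet> x \<le> w \<bullet> w - p \<bullet> p}))"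
    by (intro convex_Int convex_INT ballI convex_hyperplane convex_halfspace_le)
  moreover have "empty_disk_centres W p q =
        {x. (2 *\<^sub>R (q - p)) \<bullet> x = q \<bullet> q - p \<bullet> p} \<inter>
        (\<Inter>w\<in>W. {x. (2 *\<^sub>R (w - p)) \<bullet> x \<le> w \<bullet> w - p \<bullet> p})"
    by (auto simp: empty_disk_centres_def dist_le_iff_affine dist_eq_iff_affine inner_commute
        algebra_simps)
  ultimately show ?thesis
    by simp
qed

lemma common_frontier_voronoi:
  fixes p q :: pt
  assumes "finite W" "p \<noteq> q"
  shows "frontier (voronoi_region (insert p W) p) \<inter> frontier (voronoi_region (insert q W) q) =
         {x \<in> empty_disk_centres W p q.
            (p \<in> W \<and> q \<in> W) \<or> (\<exists>w\<in>W - {p, q}. dist x p = dist x w)}"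
proof (intro set_eqI iffI)
  fix x
  assume "x \<in> frontier (voronoi_region (insert p W) p) \<inter> frontier (voronoi_region (insert q W) q)"
  then have dom_p: "\<forall>w\<in>W. dist x p \<le> dist x w" and dom_q: "\<forall>w\<in>W. dist x q \<le> dist x w"
    and "\<exists>w\<in>W - {p}. dist x p = dist x w" "\<exists>w\<in>W - {q}. dist x q = dist x w"
    unfolding frontier_voronoi_region[OF assms(1)] by blast+
  then obtain wp wq where
    wp: "wp \<in> W - {p}" "dist x p = dist x wp" and wq: "wq \<in> W - {q}" "dist x q = dist x wq"
    by blast
  have eq: "dist x p = dist x q"
    using dom_p[rule_format, of wq] dom_q[rule_format, of wp] wp wq by simp
  have "(p \<in> W \<and> q \<in> W) \<or> (\<exists>w\<in>W - {p, q}. dist x p = dist x w)"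
  proof (cases "wp = q")
    case False
    then show ?thesis
      using wp by blast
  next
    case True
    show ?thesis
    proof (cases "wq = p")
      case False
      then have "wq \<in> W - {p, q}" "dist x p = dist x wq"
        using wq eq by auto
      then show ?thesis
        by blast
    qed (use True wp wq in blast)
  qed
  then show "x \<in> {x \<in> empty_disk_centres W p q.
                  (p \<in> W \<and> q \<in> W) \<or> (\<exists>w\<in>W - {p, q}. dist x p = dist x w)}"
    using eq dom_p unfolding empty_disk_centres_def by blast
next
  fix x
  assume "x \<in> {x \<in> empty_disk_centres W p q.
                (p \<in> W \<and> q \<in> W) \<or> (\<exists>w\<in>W - {p, q}. dist x p = dist x w)}"
  then have eq: "dist x p = dist x q" and dom_p: "\<forall>w\<in>W. dist x p \<le> dist x w"
    and tie: "(p \<in> W \<and> q \<in> W) \<or> (\<exists>w\<in>W - {p, q}. dist x p = dist x w)"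
    unfolding empty_disk_centres_def by blast+
  have "(\<exists>w\<in>W - {p}. dist x p = dist x w) \<and> (\<exists>w\<in>W - {q}. dist x q = dist x w)"
  proof (cases "p \<in> W \<and> q \<in> W")
    case True
    then show ?thesis
      using eq assms(2) by (intro conjI bexI[of _ q] bexI[of _ p]) auto
  next
    case False
    then obtain w where "w \<in> W - {p, q}" "dist x p = dist x w"
      using tie by blast
    then show ?thesis
      using eq by (intro conjI bexI[of _ w]) auto
  qed
  moreover have "\<forall>w\<in>W. dist x q \<le> dist x w"
    using dom_p eq by simp
  ultimately show "x \<in> frontier (voronoi_region (insert p W) p) \<inter> frontier (voronoi_region (insert q W) q)"
    unfolding frontier_voronoi_region[OF assms(1)] using dom_p by blast
qed

lemma witness_adj_iff_empty_disk_centre: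
  assumes "p \<in> P" "q \<in> P" "p \<noteq> q"
  shows "witness_adj P W p q \<longleftrightarrow> empty_disk_centres W p q \<noteq> {}"
proof
  assume "witness_adj P W p q"
  then obtain c r where "dist c p = r" "dist c q = r" "ball c r \<inter> W = {}"
    unfolding witness_adj_def by blast
  then have "c \<in> empty_disk_centres W p q"
    by (force simp: empty_disk_centres_def)
  then show "empty_disk_centres W p q \<noteq> {}"
    by blast
next
  assume "empty_disk_centres W p q \<noteq> {}"
  then obtain c where c: "dist c p = dist c q" "\<forall>w\<in>W. dist c p \<le> dist c w"
    by (auto simp: empty_disk_centres_def)
  have "dist c p > 0"
    using c(1) assms(3) by (metis dist_eq_0_iff zero_less_dist_iff)
  moreover have "ball c (dist c p) \<inter> W = {}"
    using c(2) by (auto simp: not_less)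
  ultimately show "witness_adj P W p q"
    using assms c(1) unfolding witness_adj_def by metis
qed

text \<open>If a point of \<open>V(q)\<close> is at least as close to \<open>p\<close> as to \<open>q\<close>, the segment from it to
  \<open>q\<close> crosses the bisector inside the convex region \<open>V(q)\<close>; the crossing is a centre.\<close>

lemma bisector_crossing_in_cell:
  fixes x p q :: "'a::real_inner"
  assumes dom_x: "\<forall>w\<in>W. dist x q \<le> dist x w" and "dist x p \<le> dist x q" and "p \<noteq> q"
  shows "empty_disk_centres W p q \<noteq> {}"
proof -
  define h where "h y = 2 * (y \<bullet> (q - p)) + (p \<bullet> p - q \<bullet> q)" for y
  have "h x \<le> 0"
    using assms(2) by (simp add: h_def dist_le_iff_affine)
  moreover have "h q > 0"
    using dist_sq_diff_affine[of q p q] assms(3) zero_less_power2[of "dist q p"]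
    by (simp add: h_def)
  ultimately obtain s where s: "0 \<le> s" "s \<le> 1" "(1 - s) * h x + s * h q = 0"
    by (intro that[of "- h x / (h q - h x)"]) (auto simp: field_simps)
  define y where "y = (1 - s) *\<^sub>R x + s *\<^sub>R q"
  have convex_comb: "2 * (y \<bullet> c) + k = (1 - s) * (2 * (x \<bullet> c) + k) + s * (2 * (q \<bullet> c) + k)"
    for c k
    by (simp add: y_def inner_add_left algebra_simps)
  have "dist y p = dist y q"
    using convex_comb[of "q - p"] s(3) by (simp add: h_def dist_eq_iff_affine)
  moreover have "dist y q \<le> dist y w" if "w \<in> W" for w
  proof -
    have "2 * (x \<bullet> (w - q)) + (q \<bullet> q - w \<bullet> w) \<le> 0"
      using dom_x that by (simp add: dist_le_iff_affine)
    moreover have "2 * (q \<bullet> (w - q)) + (q \<bullet> q - w \<bullet> w) \<le> 0"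
      using dist_le_iff_affine[of q q w] by simp
    ultimately show ?thesis
      using convex_comb[of "w - q"] s(1,2)
      by (simp add: dist_le_iff_affine add_nonpos_nonpos mult_nonneg_nonpos)
  qed
  ultimately show ?thesis
    by (auto simp: empty_disk_centres_def)
qed

lemma voronoi_regions_meet_imp_centre:
  fixes p q :: pt
  assumes "voronoi_region (insert p W) p \<inter> voronoi_region (insert q W) q \<noteq> {}" "p \<noteq> q"
  shows "empty_disk_centres W p q \<noteq> {}"
proof -
  obtain x where x: "\<forall>w\<in>W. dist x p \<le> dist x w" "\<forall>w\<in>W. dist x q \<le> dist x w"
    using assms(1) by (auto simp: voronoi_region_def)
  show ?thesis
  proof (cases "dist x p \<le> dist x q")
    case True
    then show ?thesis
      using bisector_crossing_in_cell[OF x(2)] assms(2) by blast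
  next
    case False
    then show ?thesis
      using bisector_crossing_in_cell[OF x(1), of q] assms(2) empty_disk_centres_commute
      by (metis linear)
  qed
qed

definition rot90 :: "pt \<Rightarrow> pt" where
  "rot90 u = (\<chi> i. if i = 1 then - u $ 2 else u $ 1)"

lemma rot90_nth [simp]: "rot90 u $ 1 = - u $ 2" "rot90 u $ 2 = u $ 1"
  by (simp_all add: rot90_def)

lemma inner_2: "u \<bullet> v = u $ 1 * v $ 1 + u $ 2 * v $ 2" for u v :: pt
  by (simp add: inner_vec_def sum_2)

lemma inner_rot90_self [simp]: "rot90 u \<bullet> u = 0"
  by (simp add: inner_2)

lemma rot90_rot90 [simp]: "rot90 (rot90 u) = - u"
  by (simp add: vec_eq_iff forall_2)

lemma rot90_eq_0_iff [simp]: "rot90 u = 0 \<longleftrightarrow> u = 0"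
  by (auto simp: vec_eq_iff forall_2)

lemma orthogonal_rot90_imp_parallel:
  fixes u v :: pt
  assumes "u \<noteq> 0" "v \<bullet> rot90 u = 0"
  shows "v = ((v \<bullet> u) / (u \<bullet> u)) *\<^sub>R u"
proof -
  have "u \<bullet> u \<noteq> 0"
    using assms(1) by simp
  moreover have "v $ 1 * (u \<bullet> u) = (v \<bullet> u) * u $ 1" "v $ 2 * (u \<bullet> u) = (v \<bullet> u) * u $ 2"
    using assms(2) unfolding inner_2 rot90_nth by algebra+
  ultimately show ?thesis
    by (simp add: vec_eq_iff forall_2 field_simps)
qed

lemma bisector_eq_line:
  fixes p q x :: pt
  assumes "p \<noteq> q"
  shows "dist x p = dist x q \<longleftrightarrow> x \<in> range (\<lambda>t. midpoint p q + t *\<^sub>R rot90 (q - p))"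
proof -
  have mid: "2 * (midpoint p q \<bullet> (q - p)) = q \<bullet> q - p \<bullet> p"
    by (simp add: midpoint_def inner_add_left inner_diff_right inner_commute algebra_simps)
  have "(x - midpoint p q) \<bullet> (q - p) = (2 * (x \<bullet> (q - p)) + (p \<bullet> p - q \<bullet> q)) / 2"
    using mid by (simp add: inner_diff_left field_simps)
  then have "dist x p = dist x q \<longleftrightarrow> (x - midpoint p q) \<bullet> (q - p) = 0"
    unfolding dist_eq_iff_affine by argo
  also have "\<dots> \<longleftrightarrow> (\<exists>t. x - midpoint p q = t *\<^sub>R rot90 (q - p))"
  proof
    assume "(x - midpoint p q) \<bullet> (q - p) = 0"
    then have "(x - midpoint p q) \<bullet> rot90 (rot90 (q - p)) = 0"
      by (simp only: rot90_rot90 inner_minus_right neg_equal_0_iff_equal)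
    then show "\<exists>t. x - midpoint p q = t *\<^sub>R rot90 (q - p)"
      using orthogonal_rot90_imp_parallel[of "rot90 (q - p)"] assms by auto
  qed auto
  finally show ?thesis
    by (auto simp: algebra_simps)
qed

lemma collinear_bisector:
  fixes p q :: pt
  assumes "p \<noteq> q"
  shows "collinear {x. dist x p = dist x q}"
  unfolding collinear_def bisector_eq_line[OF assms]
proof (intro exI[of _ "rot90 (q - p)"] ballI)
  fix x y
  assume "x \<in> {x. x \<in> range (\<lambda>t. midpoint p q + t *\<^sub>R rot90 (q - p))}"
    and "y \<in> {x. x \<in> range (\<lambda>t. midpoint p q + t *\<^sub>R rot90 (q - p))}"
  then obtain s t where "x = midpoint p q + s *\<^sub>R rot90 (q - p)" "y = midpoint p q + t *\<^sub>R rot90 (q - p)"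
    by blast
  then have "x - y = (s - t) *\<^sub>R rot90 (q - p)"
    by (simp add: algebra_simps)
  then show "\<exists>c. x - y = c *\<^sub>R rot90 (q - p)"
    by blast
qed

lemma general_position_noncollinear:
  assumes "general_position S" "a \<in> S" "b \<in> S" "c \<in> S" "a \<noteq> b" "a \<noteq> c" "b \<noteq> c"
  shows "\<not> collinear {a, b, c}"
  using assms unfolding general_position_def by blast

text \<open>For a witness \<open>w\<close> off the line \<open>pq\<close>, the comparison of distances to \<open>p\<close> and \<open>w\<close> has
  nonzero slope along the bisector.\<close>

lemma bisector_slope_nonzero:
  fixes p q w :: pt
  assumes "\<not> collinear {p, q, w}"
  shows "rot90 (q - p) \<bullet> (w - p) \<noteq> 0"
proof
  assume "rot90 (q - p) \<bullet> (w - p) = 0"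
  moreover have "q - p \<noteq> 0"
    using assms by auto
  ultimately have "w - p = ((w - p) \<bullet> (q - p) / ((q - p) \<bullet> (q - p))) *\<^sub>R (q - p)"
    by (intro orthogonal_rot90_imp_parallel) (auto simp: inner_commute)
  then have "collinear {0, q - p, w - p}"
    unfolding collinear_lemma by blast
  then have "collinear {q, p, w}"
    by (subst collinear_3) simp_all
  then have "collinear {p, q, w}"
    by (simp add: insert_commute)
  with assms show False
    by contradiction
qed

definition feasible_set :: "'w set \<Rightarrow> ('w \<Rightarrow> real) \<Rightarrow> ('w \<Rightarrow> real) \<Rightarrow> real set" where
  "feasible_set A a b = {t. \<forall>w\<in>A. a w * t + b w \<le> 0}"

definition active_set :: "'w set \<Rightarrow> ('w \<Rightarrow> real) \<Rightarrow> ('w \<Rightarrow> real) \<Rightarrow> real set" where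
  "active_set A a b = {t \<in> feasible_set A a b. \<exists>w\<in>A. a w * t + b w = 0}"

lemma affine_negative_between:
  fixes \<alpha> \<beta> s t u :: real
  assumes "\<alpha> \<noteq> 0" "\<alpha> * s + \<beta> \<le> 0" "\<alpha> * u + \<beta> \<le> 0" "s < t" "t < u"
  shows "\<alpha> * t + \<beta> < 0"
proof (cases "\<alpha> > 0")
  case True
  then have "\<alpha> * t < \<alpha> * u"
    using assms(5) by simp
  then show ?thesis
    using assms(3) by linarith
next
  case False
  then have "\<alpha> * t < \<alpha> * s"
    using assms(1,4) by (simp add: mult_less_cancel_left)
  then show ?thesis
    using assms(2) by linarith
qed

lemma active_set_subset_extremes:
  assumes "\<forall>w\<in>A. a w \<noteq> 0"
  shows "active_set A a b \<subseteq> {Inf (feasible_set A a b), Sup (feasible_set A a b)}"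
proof
  fix t
  assume "t \<in> active_set A a b"
  then obtain w where t: "t \<in> feasible_set A a b" and w: "w \<in> A" "a w * t + b w = 0"
    by (auto simp: active_set_def)
  have "(\<forall>s\<in>feasible_set A a b. t \<le> s) \<or> (\<forall>s\<in>feasible_set A a b. s \<le> t)"
  proof (rule ccontr)
    assume "\<not> ?thesis"
    then obtain s u where "s \<in> feasible_set A a b" "u \<in> feasible_set A a b" "s < t" "t < u"
      by (auto simp: not_le)
    then have "a w * t + b w < 0"
      using w(1) assms by (intro affine_negative_between[of "a w" s "b w" u]) (auto simp: feasible_set_def)
    with w(2) show False
      by simp
  qed
  then show "t \<in> {Inf (feasible_set A a b), Sup (feasible_set A a b)}"
    using t cInf_eq_minimum cSup_eq_maximum by blast
qed

lemma finite_active_set: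
  assumes "\<forall>w\<in>A. a w \<noteq> 0"
  shows "finite (active_set A a b) \<and> card (active_set A a b) \<le> 2"
proof -
  let ?E = "{Inf (feasible_set A a b), Sup (feasible_set A a b)}"
  have "finite ?E" "card ?E \<le> 2"
    by (simp_all add: card_insert_le_m1)
  with active_set_subset_extremes[OF assms] show ?thesis
    by (meson card_mono finite_subset order_trans)
qed

text \<open>A nonempty feasible set that is not all of \<open>\<real>\<close> has a boundary point, and there some
  constraint must be active.\<close>

lemma active_set_nonempty:
  assumes "finite A" "w0 \<in> A" "a w0 \<noteq> 0" "feasible_set A a b \<noteq> {}"
  shows "active_set A a b \<noteq> {}"
proof -
  let ?F = "feasible_set A a b"
  have "closed ?F"
    unfolding feasible_set_def Collect_ball_eq
    by (intro closed_INT ballI closed_Collect_le continuous_intros)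
  have "a w0 * ((1 - b w0) / a w0) + b w0 = 1"
    using assms(3) by simp
  then have "(1 - b w0) / a w0 \<notin> ?F"
    using assms(2) unfolding feasible_set_def by force
  then obtain t where "t \<in> frontier ?F"
    using frontier_not_empty[OF assms(4)] by blast
  then have t: "t \<in> ?F" "t \<notin> interior ?F"
    using \<open>closed ?F\<close> by (auto simp: frontier_def)
  show ?thesis
  proof
    assume "active_set A a b = {}"
    then have "t \<in> {s. \<forall>w\<in>A. a w * s + b w < 0}"
      using t(1) by (force simp: active_set_def feasible_set_def)
    moreover have "open {s. \<forall>w\<in>A. a w * s + b w < 0}"
      unfolding Collect_ball_eq using assms(1)
      by (intro open_INT ballI open_Collect_less continuous_intros)
    moreover have "{s. \<forall>w\<in>A. a w * s + b w < 0} \<subseteq> ?F"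
      by (auto simp: feasible_set_def less_imp_le)
    ultimately have "t \<in> interior ?F"
      by (meson interiorI)
    with t(2) show False
      by contradiction
  qed
qed

lemma empty_disk_centres_on_bisector:
  fixes p q :: pt
  assumes "p \<noteq> q"
  defines "\<phi> \<equiv> \<lambda>t. midpoint p q + t *\<^sub>R rot90 (q - p)"
    and "a \<equiv> \<lambda>w. 2 * (rot90 (q - p) \<bullet> (w - p))"
    and "b \<equiv> \<lambda>w. 2 * (midpoint p q \<bullet> (w - p)) + (p \<bullet> p - w \<bullet> w)"
  shows "empty_disk_centres W p q = \<phi> ` feasible_set (W - {p, q}) a b"
    and "{x \<in> empty_disk_centres W p q. \<exists>w\<in>W - {p, q}. dist x p = dist x w} =
         \<phi> ` active_set (W - {p, q}) a b"
proof -
  have along: "dist (\<phi> t) p \<le> dist (\<phi> t) w \<longleftrightarrow> a w * t + b w \<le> 0"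
    "dist (\<phi> t) p = dist (\<phi> t) w \<longleftrightarrow> a w * t + b w = 0" for t w
    unfolding \<phi>_def a_def b_def by (rule dist_along_line)+
  have centres: "empty_disk_centres W p q =
                 {x. x \<in> range \<phi> \<and> (\<forall>w\<in>W - {p, q}. dist x p \<le> dist x w)}"
  proof (intro set_eqI iffI)
    fix x
    assume "x \<in> empty_disk_centres W p q"
    then show "x \<in> {x. x \<in> range \<phi> \<and> (\<forall>w\<in>W - {p, q}. dist x p \<le> dist x w)}"
      using bisector_eq_line[OF assms(1), of x] by (auto simp: empty_disk_centres_def \<phi>_def)
  next
    fix x
    assume x: "x \<in> {x. x \<in> range \<phi> \<and> (\<forall>w\<in>W - {p, q}. dist x p \<le> dist x w)}"
    then have eq: "dist x p = dist x q"
      using bisector_eq_line[OF assms(1), of x] by (simp add: \<phi>_def)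
    have "dist x p \<le> dist x w" if "w \<in> W" for w
      using x eq that by (cases "w = p \<or> w = q") auto
    with eq show "x \<in> empty_disk_centres W p q"
      by (simp add: empty_disk_centres_def)
  qed
  have image: "{x. x \<in> range \<phi> \<and> R x} = \<phi> ` {t. R (\<phi> t)}" for R
    by auto
  show "empty_disk_centres W p q = \<phi> ` feasible_set (W - {p, q}) a b"
    unfolding centres image feasible_set_def along ..
  have "{x \<in> empty_disk_centres W p q. \<exists>w\<in>W - {p, q}. dist x p = dist x w} =
        {x. x \<in> range \<phi> \<and> (\<forall>w\<in>W - {p, q}. dist x p \<le> dist x w) \<and>
            (\<exists>w\<in>W - {p, q}. dist x p = dist x w)}"
    unfolding centres by blast
  then show "{x \<in> empty_disk_centres W p q. \<exists>w\<in>W - {p, q}. dist x p = dist x w} =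
             \<phi> ` active_set (W - {p, q}) a b"
    unfolding image active_set_def feasible_set_def along by simp
qed

lemma empty_disk_centres_tie_points:
  fixes p q :: pt
  assumes "finite W" "p \<noteq> q" and noncollinear: "\<forall>w\<in>W - {p, q}. \<not> collinear {p, q, w}"
  defines "T \<equiv> {x \<in> empty_disk_centres W p q. \<exists>w\<in>W - {p, q}. dist x p = dist x w}"
  shows "finite T \<and> card T \<le> 2"
    and "W - {p, q} \<noteq> {} \<Longrightarrow> empty_disk_centres W p q \<noteq> {} \<Longrightarrow> T \<noteq> {}"
proof -
  define a where "a w = 2 * (rot90 (q - p) \<bullet> (w - p))" for w
  define b where "b w = 2 * (midpoint p q \<bullet> (w - p)) + (p \<bullet> p - w \<bullet> w)" for w
  define \<phi> where "\<phi> t = midpoint p q + t *\<^sub>R rot90 (q - p)" for t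
  have slopes: "\<forall>w\<in>W - {p, q}. a w \<noteq> 0"
    using noncollinear bisector_slope_nonzero by (simp add: a_def)
  have C: "empty_disk_centres W p q = \<phi> ` feasible_set (W - {p, q}) a b"
    and T: "T = \<phi> ` active_set (W - {p, q}) a b"
    using empty_disk_centres_on_bisector[OF assms(2), of W]
    unfolding T_def a_def[abs_def] b_def[abs_def] \<phi>_def[abs_def] by simp_all
  show "finite T \<and> card T \<le> 2"
    unfolding T using finite_active_set[OF slopes, of b] card_image_le le_trans by blast
  assume "W - {p, q} \<noteq> {}" "empty_disk_centres W p q \<noteq> {}"
  then obtain w0 where "w0 \<in> W - {p, q}" and "feasible_set (W - {p, q}) a b \<noteq> {}"
    unfolding C by blast
  then show "T \<noteq> {}"
    unfolding T using active_set_nonempty[of "W - {p, q}" w0 a b] slopes assms(1) by auto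
qed

lemma empty_disk_centres_connected_collinear:
  fixes p q :: pt
  assumes "p \<noteq> q"
  shows "connected (empty_disk_centres W p q) \<and> collinear (empty_disk_centres W p q)"
proof
  show "connected (empty_disk_centres W p q)"
    using convex_empty_disk_centres convex_connected by blast
  have "empty_disk_centres W p q \<subseteq> {x. dist x p = dist x q}"
    by (auto simp: empty_disk_centres_def)
  then show "collinear (empty_disk_centres W p q)"
    using collinear_bisector[OF assms] collinear_subset by blast
qed

text \<open>The theorem: the common boundary is the whole of the (connected, collinear) set of centres
  when \<open>p, q \<in> W\<close>, and otherwise the at most two centres with a third witness on their
  circle; it is nonempty exactly when there is a centre.\<close>

theorem mainTheorem4:
  fixes P W :: "pt set" and p q :: pt
  assumes "finite P" and "finite W" and "card P > 1" and "card W > 1"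
    and "general_position (P \<union> W)"
    and "p \<in> P" and "q \<in> P" and "p \<noteq> q"
  defines "Vp \<equiv> voronoi_region (insert p W) p"
    and "Vq \<equiv> voronoi_region (insert q W) q"
  shows "(frontier Vp \<inter> frontier Vq = {} \<or>
          (finite (frontier Vp \<inter> frontier Vq) \<and> card (frontier Vp \<inter> frontier Vq) \<le> 2) \<or>
          (connected (frontier Vp \<inter> frontier Vq) \<and> collinear (frontier Vp \<inter> frontier Vq)))
       \<and> (Vp \<inter> Vq \<noteq> {} \<longrightarrow> frontier Vp \<inter> frontier Vq \<noteq> {})
       \<and> (W \<noteq> {p, q} \<longrightarrow> (witness_adj P W p q \<longleftrightarrow> frontier Vp \<inter> frontier Vq \<noteq> {}))"
proof -
  let ?C = "empty_disk_centres W p q"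
  define T where "T = {x \<in> ?C. \<exists>w\<in>W - {p, q}. dist x p = dist x w}"
  have noncollinear: "\<forall>w\<in>W - {p, q}. \<not> collinear {p, q, w}"
  proof
    fix w
    assume "w \<in> W - {p, q}"
    then show "\<not> collinear {p, q, w}"
      using assms(6-8) by (intro general_position_noncollinear[OF assms(5)]) auto
  qed
  have common_frontier: "frontier Vp \<inter> frontier Vq = (if p \<in> W \<and> q \<in> W then ?C else T)"
    unfolding Vp_def Vq_def T_def common_frontier_voronoi[OF assms(2,8)] by auto
  have spare_witness: "W - {p, q} \<noteq> {}" if "\<not> (p \<in> W \<and> q \<in> W)"
  proof
    assume "W - {p, q} = {}"
    with that have "W \<subseteq> {p} \<or> W \<subseteq> {q}"
      by blast
    then have "card W \<le> 1"
      using card_mono[of "{p}" W] card_mono[of "{q}" W] by auto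
    with assms(4) show False
      by simp
  qed
  have T: "finite T \<and> card T \<le> 2" "?C \<noteq> {} \<Longrightarrow> \<not> (p \<in> W \<and> q \<in> W) \<Longrightarrow> T \<noteq> {}"
    using empty_disk_centres_tie_points[OF assms(2,8) noncollinear] spare_witness
    unfolding T_def by blast+
  have frontier_iff_centre: "frontier Vp \<inter> frontier Vq \<noteq> {} \<longleftrightarrow> ?C \<noteq> {}"
    using common_frontier T(2) unfolding T_def by auto
  show ?thesis
    using common_frontier T(1) empty_disk_centres_connected_collinear[OF assms(8)]
      frontier_iff_centre voronoi_regions_meet_imp_centre[OF _ assms(8)]
      witness_adj_iff_empty_disk_centre[OF assms(6-8)]
    unfolding Vp_def Vq_def by auto
qed

end
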